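(* Let $n\ge1$ and $s\in D^n$. Then $\sum_{i=1}^{n}L_i\le\left\lfloor\frac{(n+1)^2}{4}\right\rfloor$.
   Context: Let $D$ be a commutative integral domain with $1\neq 0$. For $s=(s_1,\dots,s_n)\in D^n$, a polynomial $f\in D[x]$ annihilates $s$ if $f=0$, or $d=\deg f\ge0$ and $\sum_{k=0}^{d}f_ks_{j-d+k}=0$ for all $d+1\le j\le n$. The linear complexity $L(s)$ is the least degree of a nonzero annihilator of $s$, and $L_i=L(s_1,\dots,s_i)$. *)

theory Defs
  imports "HOL-Computational_Algebra.Polynomial"
begin

text \<open>A finite sequence s = (s_1,...,s_n) over an integral domain is modelled by a
function s :: nat => 'a, of which only the values s 1, ..., s n are relevant.\<close>

definition annihilates :: "'a::idom poly \<Rightarrow> (nat \<Rightarrow> 'a) \<Rightarrow> nat \<Rightarrow> bool" where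
  "annihilates f s n \<longleftrightarrow> f = 0 \<or>
     (\<forall>j. degree f + 1 \<le> j \<and> j \<le> n \<longrightarrow>
        (\<Sum>k = 0..degree f. coeff f k * s (j - degree f + k)) = 0)"

definition lin_compl :: "(nat \<Rightarrow> 'a::idom) \<Rightarrow> nat \<Rightarrow> nat" where
  "lin_compl s n = (LEAST d. \<exists>f. f \<noteq> 0 \<and> degree f = d \<and> annihilates f s n)"

end

theory Submission imports Defs begin

(* Write L_N for the linear complexity of the prefix (s_1,...,s_N).
   Reversing coefficients, a nonzero annihilator of degree d is the same as a
   "connection vector" u with u_0 \<noteq> 0, supported on {0..d}, whose discrepancy
   \<Sum>_{i\<le>d} u_i s_{j-i} vanishes for d < j \<le> N.  In this language:
   (1) L_N \<le> N and L_N is monotone in N;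
   (2) Massey's jump bound  L_{N+1} \<le> max L_N (N+1-L_N): if L_{N+1} > L_N is
       to be bounded, take the last position k at which the complexity jumped
       to L_N and cancel the discrepancy of the current annihilator at N+1 by a
       shifted multiple of the annihilator of the prefix of length k (the
       Berlekamp-Massey update step);
   (3) from (1),(2) by induction: \<Sum>_{i=1..n} L_i \<le> L_n (n+1-L_n);
   (4) m (c-m) \<le> c^2/4, which with c = n+1 gives the theorem. *)

section \<open>Connection vectors and their discrepancies\<close>

definition conn_disc :: "(nat \<Rightarrow> 'a::idom) \<Rightarrow> (nat \<Rightarrow> 'a) \<Rightarrow> nat \<Rightarrow> nat \<Rightarrow> 'a" where
  "conn_disc s u d j = (\<Sum>i = 0..d. u i * s (j - i))"

definition conn_ann :: "(nat \<Rightarrow> 'a::idom) \<Rightarrow> nat \<Rightarrow> nat \<Rightarrow> bool" where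
  "conn_ann s d N \<longleftrightarrow> (\<exists>u. u 0 \<noteq> 0 \<and> (\<forall>i>d. u i = 0) \<and>
                              (\<forall>j. d < j \<and> j \<le> N \<longrightarrow> conn_disc s u d j = 0))"

lemma conn_disc_pad:
  assumes "\<forall>i>d. u i = 0" and "d \<le> e"
  shows "conn_disc s u e j = conn_disc s u d j"
  unfolding conn_disc_def by (rule sum.mono_neutral_right) (use assms in auto)

lemma annihilation_sum_reversed:
  assumes "\<And>i. i \<le> d \<Longrightarrow> u i = coeff f (d - i)" and "d < j"
  shows "(\<Sum>k = 0..d. coeff f k * s (j - d + k)) = conn_disc s u d j"
proof -
  have "(\<Sum>k = 0..d. coeff f k * s (j - d + k))
        = (\<Sum>i = 0..d. coeff f (d - i) * s (j - d + (d - i)))"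
    using sum.atLeastAtMost_rev[of "\<lambda>k. coeff f k * s (j - d + k)" 0 d] by simp
  also have "\<dots> = conn_disc s u d j"
    unfolding conn_disc_def by (rule sum.cong) (use assms in auto)
  finally show ?thesis .
qed

lemma annihilator_iff_conn_ann:
  "(\<exists>f. f \<noteq> 0 \<and> degree f = d \<and> annihilates f s N) \<longleftrightarrow> conn_ann s d N"
proof
  assume "\<exists>f. f \<noteq> 0 \<and> degree f = d \<and> annihilates f s N"
  then obtain f where f: "f \<noteq> 0" "degree f = d" "annihilates f s N" by blast
  define u where "u i = (if i \<le> d then coeff f (d - i) else 0)" for i
  have "u 0 \<noteq> 0" using f(1,2) by (auto simp: u_def)
  moreover have "\<forall>i>d. u i = 0" by (simp add: u_def)
  moreover have "conn_disc s u d j = 0" if "d < j" "j \<le> N" for j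
    using annihilation_sum_reversed[of d u f j s] f that
    by (auto simp: u_def annihilates_def)
  ultimately show "conn_ann s d N" unfolding conn_ann_def by blast
next
  assume "conn_ann s d N"
  then obtain u where u: "u 0 \<noteq> 0" "\<forall>i>d. u i = 0"
    "\<forall>j. d < j \<and> j \<le> N \<longrightarrow> conn_disc s u d j = 0"
    unfolding conn_ann_def by blast
  define f where "f = Poly (map (\<lambda>k. u (d - k)) [0..<Suc d])"
  have coeff_f: "coeff f k = (if k \<le> d then u (d - k) else 0)" for k
    unfolding f_def by (auto simp: nth_default_def simp del: upt_Suc)
  have deg: "degree f = d"
    by (rule antisym) (auto intro!: degree_le le_degree simp: coeff_f u(1))
  have "f \<noteq> 0" using coeff_f[of d] u(1) by auto
  moreover have "annihilates f s N"
    using annihilation_sum_reversed[of d u f _ s] u(3)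
    by (auto simp: annihilates_def deg coeff_f)
  ultimately show "\<exists>f. f \<noteq> 0 \<and> degree f = d \<and> annihilates f s N" using deg by blast
qed

lemma lin_compl_conn: "lin_compl s N = (LEAST d. conn_ann s d N)"
  unfolding lin_compl_def annihilator_iff_conn_ann ..

lemma conn_ann_trivial: "conn_ann s N N"
  unfolding conn_ann_def by (rule exI[of _ "\<lambda>i. if i = 0 then 1 else 0"]) auto

lemma conn_ann_lin_compl: "conn_ann s (lin_compl s N) N"
  unfolding lin_compl_conn by (rule LeastI[OF conn_ann_trivial])

lemma lin_compl_le: "conn_ann s d N \<Longrightarrow> lin_compl s N \<le> d"
  unfolding lin_compl_conn by (rule Least_le)

lemma lin_compl_le_length: "lin_compl s N \<le> N"
  by (rule lin_compl_le[OF conn_ann_trivial])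

text \<open>A generator of a prefix generates every shorter prefix, so L_N is monotone.\<close>
lemma lin_compl_mono: "i \<le> j \<Longrightarrow> lin_compl s i \<le> lin_compl s j"
proof (rule lift_Suc_mono_le[of "lin_compl s"])
  fix N
  have "conn_ann s (lin_compl s (Suc N)) N"
    using conn_ann_lin_compl[of s "Suc N"] unfolding conn_ann_def by auto
  then show "lin_compl s N \<le> lin_compl s (Suc N)" by (rule lin_compl_le)
qed

section \<open>Massey's jump bound\<close>

lemma conn_disc_lincomb:
  "conn_disc s (\<lambda>i. a * u i - b * v i) d j = a * conn_disc s u d j - b * conn_disc s v d j"
  unfolding conn_disc_def
  by (simp add: sum_subtractf sum_distrib_left algebra_simps)

lemma conn_disc_shift:
  assumes "\<forall>i>a. v i = 0" and "r + a \<le> E"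
  shows "conn_disc s (\<lambda>i. if r \<le> i then v (i - r) else 0) E j = conn_disc s v a (j - r)"
proof -
  have "conn_disc s (\<lambda>i. if r \<le> i then v (i - r) else 0) E j
        = (\<Sum>i = r..E. v (i - r) * s (j - i))"
    unfolding conn_disc_def by (rule sum.mono_neutral_cong_right) (simp_all, force)
  also have "\<dots> = (\<Sum>i = 0..E - r. v i * s (j - r - i))"
    using sum.shift_bounds_cl_nat_ivl[of "\<lambda>i. v (i - r) * s (j - i)" 0 r "E - r"] assms(2)
    by (simp add: add.commute diff_diff_eq)
  also have "\<dots> = conn_disc s v a (j - r)"
    unfolding conn_disc_def[symmetric] by (rule conn_disc_pad) (use assms in auto)
  finally show ?thesis .
qed

text \<open>The Berlekamp-Massey update step.\<close>
lemma conn_ann_update: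
  fixes s :: "nat \<Rightarrow> 'a::idom"
  assumes u: "u 0 \<noteq> 0" "\<forall>i>m. u i = 0" "\<forall>j. m < j \<and> j \<le> n \<longrightarrow> conn_disc s u m j = 0"
    and v: "v 0 \<noteq> 0" "\<forall>i>a. v i = 0" "\<forall>j. a < j \<and> j \<le> k \<longrightarrow> conn_disc s v a j = 0"
    and v_fails: "conn_disc s v a (Suc k) \<noteq> 0"
    and ma: "m + a \<le> Suc k" and kn: "k < n"
  shows "conn_ann s (max m (Suc n - m)) (Suc n)"
proof -
  define E where "E = max m (Suc n - m)"
  define r where "r = n - k"
  define \<delta> where "\<delta> = conn_disc s u m (Suc n)"
  define \<epsilon> where "\<epsilon> = conn_disc s v a (Suc k)"
  define w where "w i = (if r \<le> i then v (i - r) else 0)" for i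
  define h where "h i = \<epsilon> * u i - \<delta> * w i" for i
  have r_pos: "1 \<le> r" and Era: "r + a \<le> E" and mE: "m \<le> E"
    using ma kn by (auto simp: E_def r_def)
  have h0: "h 0 \<noteq> 0" using r_pos u(1) v_fails by (simp add: h_def w_def \<epsilon>_def)
  have h_supp: "\<forall>i>E. h i = 0" using u(2) v(2) mE Era by (auto simp: h_def w_def)
  have h_disc: "conn_disc s h E j = \<epsilon> * conn_disc s u m j - \<delta> * conn_disc s v a (j - r)" for j
  proof -
    have "conn_disc s h E j = \<epsilon> * conn_disc s u E j - \<delta> * conn_disc s w E j"
      unfolding h_def by (rule conn_disc_lincomb)
    also have "\<dots> = \<epsilon> * conn_disc s u m j - \<delta> * conn_disc s v a (j - r)"
      unfolding w_def using conn_disc_pad[OF u(2) mE] conn_disc_shift[OF v(2) Era] by simp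
    finally show ?thesis .
  qed
  have "conn_disc s h E j = 0" if j: "E < j" "j \<le> Suc n" for j
  proof (cases "j = Suc n")
    case True
    then have "j - r = Suc k" using kn by (simp add: r_def)
    then show ?thesis using True h_disc by (simp add: \<delta>_def \<epsilon>_def)
  next
    case False
    then have "m < j \<and> j \<le> n" and "a < j - r \<and> j - r \<le> k"
      using j mE Era kn unfolding r_def by linarith+
    then show ?thesis using h_disc u(3) v(3) by simp
  qed
  then show ?thesis unfolding conn_ann_def E_def[symmetric] using h0 h_supp by blast
qed

lemma nat_fun_crossing:
  fixes f :: "nat \<Rightarrow> nat"
  assumes "f 0 < m" and "m \<le> f n"
  shows "\<exists>k<n. f k < m \<and> m \<le> f (Suc k)"
  using assms
proof (induction n)
  case (Suc n)
  then show ?case by (cases "m \<le> f n") (auto intro: less_SucI)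
qed simp

text \<open>Let k be the
  step where the complexity last jumped to m = L_N; the induction hypothesis at k gives
  m + L_k \<le> k+1, which is exactly what the update step needs.\<close>
lemma lin_compl_jump:
  "lin_compl s (Suc N) \<le> max (lin_compl s N) (Suc N - lin_compl s N)"
proof (induction N rule: less_induct)
  case (less N)
  define m where "m = lin_compl s N"
  show ?case
  proof (cases "m = 0")
    case True
    then show ?thesis using lin_compl_le_length[of s "Suc N"] by (simp add: m_def)
  next
    case False
    have "lin_compl s 0 = 0" using lin_compl_le_length[of s 0] by simp
    then obtain k where k: "k < N" "lin_compl s k < m" "m \<le> lin_compl s (Suc k)"
      using nat_fun_crossing[of "lin_compl s" m N] False by (auto simp: m_def)
    have jump_k: "lin_compl s (Suc k) = m"
      using k lin_compl_mono[of "Suc k" N s] by (simp add: m_def)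
    define a where "a = lin_compl s k"
    have ma: "m + a \<le> Suc k"
      using less.IH[OF k(1)] jump_k k(2) unfolding a_def by linarith
    obtain u where u: "u 0 \<noteq> 0" "\<forall>i>m. u i = 0"
        "\<forall>j. m < j \<and> j \<le> N \<longrightarrow> conn_disc s u m j = 0"
      using conn_ann_lin_compl[of s N] unfolding conn_ann_def m_def by blast
    obtain v where v: "v 0 \<noteq> 0" "\<forall>i>a. v i = 0"
        "\<forall>j. a < j \<and> j \<le> k \<longrightarrow> conn_disc s v a j = 0"
      using conn_ann_lin_compl[of s k] unfolding conn_ann_def a_def by blast
    have "conn_disc s v a (Suc k) \<noteq> 0"
    proof
      assume "conn_disc s v a (Suc k) = 0"
      then have "conn_ann s a (Suc k)" unfolding conn_ann_def using v le_Suc_eq by blast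
      then show False using lin_compl_le jump_k k(2) a_def by fastforce
    qed
    then have "conn_ann s (max m (Suc N - m)) (Suc N)"
      by (rule conn_ann_update[OF u v _ ma k(1)])
    then show ?thesis using lin_compl_le m_def by blast
  qed
qed

section \<open>The bound on the sum of linear complexities\<close>

lemma product_increase:
  fixes m M c :: nat
  assumes "m < M" and "M + m \<le> c"
  shows "m * (c - m) \<le> M * (c - M)"
proof -
  obtain d e where "M = m + d" "c = M + m + e"
    using assms by (metis le_add_diff_inverse less_imp_add_positive)
  then show ?thesis by (simp add: algebra_simps)
qed

text \<open>The invariant \<Sum>_{i=1..n} L_i \<le> L_n (n+1-L_n).  If L_{n+1} = L_n the right side grows
  by L_n; otherwise Massey's bound puts L_{n+1} on the far side of L_n from (n+1)/2.\<close>
lemma sum_lin_compl_le: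
  "(\<Sum>i = 1..n. lin_compl s i) \<le> lin_compl s n * (Suc n - lin_compl s n)"
proof (induction n)
  case (Suc n)
  define m where "m = lin_compl s n"
  define M where "M = lin_compl s (Suc n)"
  have mn: "m \<le> n" using lin_compl_le_length m_def by blast
  have mM: "m \<le> M" using lin_compl_mono[of n "Suc n" s] by (simp add: m_def M_def)
  have jump: "M \<le> max m (Suc n - m)" using lin_compl_jump M_def m_def by blast
  have "(\<Sum>i = 1..Suc n. lin_compl s i) \<le> m * (Suc n - m) + M"
    using Suc by (simp add: m_def M_def)
  also have "\<dots> \<le> M * (Suc (Suc n) - M)"
  proof (cases "M = m")
    case True
    then show ?thesis using mn by (simp add: Suc_diff_le algebra_simps)
  next
    case False
    then have "m < M" "M + m \<le> Suc n" using mM jump by auto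
    then have "m * (Suc n - m) \<le> M * (Suc n - M)" by (rule product_increase)
    moreover have "Suc (Suc n) - M = Suc (Suc n - M)" using \<open>M + m \<le> Suc n\<close> by simp
    ultimately show ?thesis by simp
  qed
  finally show ?case by (simp add: M_def)
qed simp

lemma four_product_le_square:
  fixes m c :: nat
  assumes "m \<le> c"
  shows "4 * (m * (c - m)) \<le> c^2"
proof -
  obtain t where t: "c = m + t" using assms le_Suc_ex by blast
  have "4 * (m * t) \<le> (m + t)^2"
  proof (cases "m \<le> t")
    case True
    then obtain d where "t = m + d" using le_Suc_ex by blast
    then show ?thesis by (simp add: power2_eq_square algebra_simps)
  next
    case False
    then obtain d where "m = t + d" by (metis le_Suc_ex nat_le_linear)
    then show ?thesis by (simp add: power2_eq_square algebra_simps)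
  qed
  then show ?thesis using t by simp
qed

theorem mainTheorem12:
  fixes s :: "nat \<Rightarrow> 'a::idom" and n :: nat
  assumes "n \<ge> 1"
  shows "(\<Sum>i = 1..n. lin_compl s i) \<le> (n + 1)^2 div 4"
proof -
  have "lin_compl s n \<le> n + 1" using lin_compl_le_length[of s n] by simp
  then have "4 * (lin_compl s n * (n + 1 - lin_compl s n)) \<le> (n + 1)^2"
    by (rule four_product_le_square)
  then have "lin_compl s n * (n + 1 - lin_compl s n) \<le> (n + 1)^2 div 4"
    by (simp add: less_eq_div_iff_mult_less_eq mult.commute)
  then show ?thesis using sum_lin_compl_le[of s n] by simp
qed

end
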